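(* Let $k_0>0$ and $c_0\in L^1([-\tau,0);\mathbb{R}_+)$. Assume $\lambda_0<A-\delta$, $$k_0>\int_0^{\infty}e^{-(A-\delta)s}c^m(s)\,ds,$$ and $\rho>(A-\delta)(1-\gamma)$. If $\gamma>1$ assume in addition $\frac{\varepsilon}{\eta}(1-e^{-\eta\tau})<1$ and $A-\delta>0$. Then $\mathcal C(k_0,c_0)\neq\emptyset$ and the value function $V(k_0,c_0)$ is finite. More precisely, if $\gamma\in(0,1)$ there is a constant $M_+>0$, independent of the data, with $0\le V(k_0,c_0)\le M_+k_0^{1-\gamma}$; if $\gamma>1$ then $-\infty<V(k_0,c_0)\le 0$.
   Context: Fixed parameters: $A>0$, $\delta>0$, $\rho>0$, $\gamma>0$, $\gamma\neq1$, $\varepsilon>0$, $\eta>0$, $\tau>0$. For $c\in L^1_{loc}([0,\infty);\mathbb{R}_+)$, $\widetilde c$ is its concatenation with $c_0$ ($\widetilde c=c_0$ on $[-\tau,0)$, $\widetilde c=c$ on $[0,\infty)$); $h(t)=\varepsilon\int_{t-\tau}^{t}\widetilde c(u)e^{\eta(u-t)}du$; $k(t)=k_0e^{(A-\delta)t}-\int_0^te^{(A-\delta)(t-u)}c(u)du$. Admissible set: $\mathcal C(k_0,c_0)=\{c\in L^1_{loc}([0,\infty);\mathbb{R}_+): k(t)\ge0\ \forall t,\ c(t)\ge h(t)\ge0\text{ a.e.}\}$. Objective: $J(k_0,c_0;c)=\int_0^\infty\frac{(c(t)-h(t))^{1-\gamma}}{1-\gamma}e^{-\rho t}dt$ (with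 integrand $-\infty$ where the base is not positive and $\gamma>1$); value function $V(k_0,c_0)=\sup_{c\in\mathcal C(k_0,c_0)}J(k_0,c_0;c)$. $c^m$ is the unique solution of $c^m(t)=\varepsilon\int_{t-\tau}^t\widetilde c^{\,m}(u)e^{\eta(u-t)}du$, $t\ge 0$, and $\lambda_0$ is the unique real root of $1=\varepsilon\int_{-\tau}^0e^{(\lambda+\eta)u}du$. *)

theory Defs
  imports "HOL-Analysis.Analysis"
begin

definition concat :: "(real \<Rightarrow> real) \<Rightarrow> (real \<Rightarrow> real) \<Rightarrow> real \<Rightarrow> real" where
  "concat c0 c u = (if u < 0 then c0 u else c u)"

definition hab :: "real \<Rightarrow> real \<Rightarrow> real \<Rightarrow> (real \<Rightarrow> real) \<Rightarrow> (real \<Rightarrow> real) \<Rightarrow> real \<Rightarrow> real" where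
  "hab \<epsilon> \<eta> \<tau> c0 c t =
     \<epsilon> * (LINT u:{t - \<tau>..t}|lborel. concat c0 c u * exp (\<eta> * (u - t)))"

definition capital :: "real \<Rightarrow> real \<Rightarrow> real \<Rightarrow> (real \<Rightarrow> real) \<Rightarrow> real \<Rightarrow> real" where
  "capital A \<delta> k0 c t =
     k0 * exp ((A - \<delta>) * t) - (LINT u:{0..t}|lborel. exp ((A - \<delta>) * (t - u)) * c u)"

definition admissible ::
  "real \<Rightarrow> real \<Rightarrow> real \<Rightarrow> real \<Rightarrow> real \<Rightarrow> real \<Rightarrow> (real \<Rightarrow> real) \<Rightarrow> (real \<Rightarrow> real) set" where
  "admissible A \<delta> \<epsilon> \<eta> \<tau> k0 c0 =
     {c. (\<forall>t\<ge>0. 0 \<le> c t) \<and>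
         (\<forall>T\<ge>0. set_integrable lborel {0..T} c) \<and>
         (\<forall>t\<ge>0. 0 \<le> capital A \<delta> k0 c t) \<and>
         (AE t in lborel. 0 \<le> t \<longrightarrow> hab \<epsilon> \<eta> \<tau> c0 c t \<le> c t \<and> 0 \<le> hab \<epsilon> \<eta> \<tau> c0 c t)}"

definition util :: "real \<Rightarrow> real \<Rightarrow> real" where
  "util \<gamma> x = x powr (1 - \<gamma>) / (1 - \<gamma>)"

text \<open>Objective functional (extended-real valued). For gamma<1 the integrand is
  nonnegative (on admissible controls); for gamma>1 it is nonpositive and equal to -oo
  where c - h is not positive.\<close>
definition objective ::
  "real \<Rightarrow> real \<Rightarrow> real \<Rightarrow> real \<Rightarrow> real \<Rightarrow> (real \<Rightarrow> real) \<Rightarrow> (real \<Rightarrow> real) \<Rightarrow> ereal" where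
  "objective \<gamma> \<rho> \<epsilon> \<eta> \<tau> c0 c =
     (if \<gamma> < 1 then
        enn2ereal (\<integral>\<^sup>+ t\<in>{0..}. ennreal (util \<gamma> (c t - hab \<epsilon> \<eta> \<tau> c0 c t) * exp (- \<rho> * t)) \<partial>lborel)
      else
        - enn2ereal (\<integral>\<^sup>+ t\<in>{0..}.
              (if 0 < c t - hab \<epsilon> \<eta> \<tau> c0 c t
               then ennreal (- util \<gamma> (c t - hab \<epsilon> \<eta> \<tau> c0 c t) * exp (- \<rho> * t))
               else \<infinity>) \<partial>lborel))"

definition value_fun ::
  "real \<Rightarrow> real \<Rightarrow> real \<Rightarrow> real \<Rightarrow> real \<Rightarrow> real \<Rightarrow> real \<Rightarrow> real \<Rightarrow> (real \<Rightarrow> real) \<Rightarrow> ereal" where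
  "value_fun A \<delta> \<rho> \<gamma> \<epsilon> \<eta> \<tau> k0 c0 =
     Sup (objective \<gamma> \<rho> \<epsilon> \<eta> \<tau> c0 ` admissible A \<delta> \<epsilon> \<eta> \<tau> k0 c0)"

definition cm :: "real \<Rightarrow> real \<Rightarrow> real \<Rightarrow> (real \<Rightarrow> real) \<Rightarrow> real \<Rightarrow> real" where
  "cm \<epsilon> \<eta> \<tau> c0 = (THE c. (\<forall>t<0. c t = 0) \<and>
                          (\<forall>T\<ge>0. set_integrable lborel {0..T} c) \<and>
                          (\<forall>t\<ge>0. c t = hab \<epsilon> \<eta> \<tau> c0 c t))"

definition lambda0 :: "real \<Rightarrow> real \<Rightarrow> real \<Rightarrow> real" where
  "lambda0 \<epsilon> \<eta> \<tau> = (THE l. 1 = \<epsilon> * (LINT u:{-\<tau>..0}|lborel. exp ((l + \<eta>) * u)))"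

definition data_ok :: "real \<Rightarrow> real \<Rightarrow> real \<Rightarrow> real \<Rightarrow> real \<Rightarrow> real \<Rightarrow> (real \<Rightarrow> real) \<Rightarrow> bool" where
  "data_ok A \<delta> \<epsilon> \<eta> \<tau> k0 c0 \<longleftrightarrow>
     0 < k0 \<and>
     set_integrable lborel {-\<tau>..<0} c0 \<and> (\<forall>u\<in>{-\<tau>..<0}. 0 \<le> c0 u) \<and>
     (\<integral>\<^sup>+ s\<in>{0..}. ennreal (exp (- (A - \<delta>) * s) * cm \<epsilon> \<eta> \<tau> c0 s) \<partial>lborel) < ennreal k0"

end

theory Submission
  imports Defs "HOL-Real_Asymp.Real_Asymp"
begin

(* The proof follows the paper.
   (1) The habit solution c^m exists and is unique: it is the least fixed point of the
       (monotone, ennreal-valued) habit operator, obtained by Kleene iteration from 0 and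
       dominated by an exponential supersolution; uniqueness is a Gronwall argument.
   (2) Capital stays nonnegative iff the consumption discounted at rate A - delta, up to
       time t, is at most k0.  The data assumption says that c^m has total discounted
       mass < k0, so c^m (whose habit gap is zero) is admissible.
   (3) gamma < 1: every admissible c has discounted mass <= k0, and Young's inequality
       bounds the utility integral by M k0^(1-gamma); the objective of c^m is >= 0.
   (4) gamma > 1: the slack in the budget allows the control c^m + B (B > 0 constant),
       whose habit gap c - h is bounded below by B (1 - eps/eta (1 - e^(-eta tau))) > 0,
       so its objective is finite; all objectives are <= 0.
   The theorem collects (2)-(4). *)

lemma nn_integral_exp_Icc:
  fixes L B t :: real
  assumes "0 < L" "0 \<le> B" "0 \<le> t"
  shows "(\<integral>\<^sup>+ u. ennreal (indicator {0..t} u * (B * exp (L * u))) \<partial>lborel) = ennreal (B * (exp (L * t) - 1) / L)"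
proof -
  have "(\<integral>\<^sup>+ u. ennreal (B * exp (L * u)) * indicator {0..t} u \<partial>lborel) =
     ennreal (B * exp (L * t) / L - B * exp (L * 0) / L)"
    by (rule nn_integral_FTC_Icc) (use assms in \<open>auto intro!: derivative_eq_intros simp: field_simps\<close>)
  moreover have "(\<integral>\<^sup>+ u. ennreal (indicator {0..t} u * (B * exp (L * u))) \<partial>lborel) =
     (\<integral>\<^sup>+ u. ennreal (B * exp (L * u)) * indicator {0..t} u \<partial>lborel)"
    by (intro nn_integral_cong) (simp split: split_indicator)
  ultimately show ?thesis using assms
    by (simp add: diff_divide_distrib right_diff_distrib)
qed

lemma nn_integral_exp_window:
  fixes \<eta> \<tau> t B :: real
  assumes "0 < \<eta>" "0 < \<tau>" "0 \<le> B"
  shows "(\<integral>\<^sup>+ u. ennreal (indicator {t-\<tau>..t} u * (B * exp (\<eta> * (u - t)))) \<partial>lborel)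
       = ennreal (B * (1 - exp (- \<eta> * \<tau>)) / \<eta>)"
proof -
  have "(\<integral>\<^sup>+ u. ennreal (B * exp (\<eta> * (u - t))) * indicator {t-\<tau>..t} u \<partial>lborel) =
     ennreal (B * exp (\<eta> * (t - t)) / \<eta> - B * exp (\<eta> * ((t - \<tau>) - t)) / \<eta>)"
  proof (rule nn_integral_FTC_Icc)
    show "((\<lambda>u. B * exp (\<eta> * (u - t)) / \<eta>) has_real_derivative B * exp (\<eta> * (x - t))) (at x)" for x
      using assms by (auto intro!: derivative_eq_intros simp: field_simps)
  qed (use assms in auto)
  moreover have "(\<integral>\<^sup>+ u. ennreal (indicator {t-\<tau>..t} u * (B * exp (\<eta> * (u - t)))) \<partial>lborel) =
     (\<integral>\<^sup>+ u. ennreal (B * exp (\<eta> * (u - t))) * indicator {t-\<tau>..t} u \<partial>lborel)"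
    by (intro nn_integral_cong) (simp split: split_indicator)
  moreover have "B * exp (\<eta> * (t - t)) / \<eta> - B * exp (\<eta> * ((t - \<tau>) - t)) / \<eta>
      = B * (1 - exp (- \<eta> * \<tau>)) / \<eta>"
    by (simp add: diff_divide_distrib right_diff_distrib)
  ultimately show ?thesis by simp
qed

lemma nn_integral_exp_tail:
  fixes \<beta> K :: real
  assumes "0 < \<beta>" "0 \<le> K"
  shows "(\<integral>\<^sup>+ t. ennreal (K * exp (- \<beta> * t)) * indicator {0..} t \<partial>lborel) = ennreal (K / \<beta>)"
proof -
  have "(\<integral>\<^sup>+ t. ennreal (K * exp (- \<beta> * t)) * indicator {0..} t \<partial>lborel) =
      ennreal (0 - (- K * exp (- \<beta> * 0) / \<beta>))"
  proof (rule nn_integral_FTC_atLeast)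
    show "((\<lambda>t. - K * exp (- \<beta> * t) / \<beta>) has_real_derivative K * exp (- \<beta> * x)) (at x)" for x
      using assms by (auto intro!: derivative_eq_intros simp: field_simps)
    show "((\<lambda>t. - K * exp (- \<beta> * t) / \<beta>) \<longlongrightarrow> 0) at_top" using assms by real_asymp
  qed (use assms in auto)
  then show ?thesis by simp
qed

lemma gronwall_halving_step:
  fixes e :: "real \<Rightarrow> real" and \<epsilon> t K :: real
  assumes eps: "0 < \<epsilon>" and K: "0 \<le> K"
    and ineq: "\<And>s. 0 \<le> s \<Longrightarrow> ennreal (e s) \<le> ennreal \<epsilon> * (\<integral>\<^sup>+ u. ennreal (indicator {0..s} u * e u) \<partial>lborel)"
    and bound: "\<forall>s\<in>{0..t}. e s \<le> K * exp (2 * \<epsilon> * s) / 2 ^ n"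
  shows "\<forall>s\<in>{0..t}. e s \<le> K * exp (2 * \<epsilon> * s) / 2 ^ Suc n"
proof
  fix s assume s: "s \<in> {0..t}"
  have L: "0 < 2 * \<epsilon>" using eps by simp
  have pw: "indicator {0..s} u * e u \<le> indicator {0..s} u * (K / 2 ^ n * exp (2 * \<epsilon> * u))" for u
    using bound s by (cases "u \<in> {0..s}") auto
  have "ennreal (e s) \<le> ennreal \<epsilon> * (\<integral>\<^sup>+ u. ennreal (indicator {0..s} u * e u) \<partial>lborel)"
    using s by (intro ineq) auto
  also have "\<dots> \<le> ennreal \<epsilon> * (\<integral>\<^sup>+ u. ennreal (indicator {0..s} u * (K / 2 ^ n * exp (2 * \<epsilon> * u))) \<partial>lborel)"
    by (intro mult_left_mono nn_integral_mono ennreal_leI pw) simp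
  also have "\<dots> = ennreal \<epsilon> * ennreal (K / 2 ^ n * (exp (2 * \<epsilon> * s) - 1) / (2 * \<epsilon>))"
    using s K by (subst nn_integral_exp_Icc[OF L]) auto
  also have "\<dots> = ennreal (\<epsilon> * (K / 2 ^ n * (exp (2 * \<epsilon> * s) - 1) / (2 * \<epsilon>)))"
    using eps K s by (subst ennreal_mult) auto
  also have "\<epsilon> * (K / 2 ^ n * (exp (2 * \<epsilon> * s) - 1) / (2 * \<epsilon>)) = K * (exp (2 * \<epsilon> * s) - 1) / 2 ^ Suc n"
    using eps by (simp add: field_simps)
  also have "ennreal \<dots> \<le> ennreal (K * exp (2 * \<epsilon> * s) / 2 ^ Suc n)"
    using K by (intro ennreal_leI divide_right_mono mult_left_mono) auto
  finally show "e s \<le> K * exp (2 * \<epsilon> * s) / 2 ^ Suc n"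
    using K by (simp add: ennreal_le_iff)
qed

text \<open>Gronwall's lemma with zero forcing: a nonnegative function with locally finite
  integral satisfying \<open>e t \<le> \<epsilon> \<integral>\<^sub>0\<^sup>t e\<close> vanishes on \<open>[0,\<infinity>)\<close>, since by the halving step
  \<open>e \<le> K e^(2\<epsilon>s) / 2^n\<close> on \<open>[0,t]\<close> for every \<open>n\<close>.  This yields uniqueness of the habit
  solution.\<close>

lemma gronwall_zero:
  fixes e :: "real \<Rightarrow> real" and \<epsilon> t :: real
  assumes eps: "0 < \<epsilon>" and en: "\<And>u. 0 \<le> e u"
    and ineq: "\<And>t. 0 \<le> t \<Longrightarrow> ennreal (e t) \<le> ennreal \<epsilon> * (\<integral>\<^sup>+ u. ennreal (indicator {0..t} u * e u) \<partial>lborel)"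
    and fin: "\<And>T. (\<integral>\<^sup>+ u. ennreal (indicator {0..T} u * e u) \<partial>lborel) < top"
    and t: "0 \<le> t"
  shows "e t = 0"
proof -
  define K where "K = enn2real (ennreal \<epsilon> * (\<integral>\<^sup>+ u. ennreal (indicator {0..t} u * e u) \<partial>lborel))"
  have Keq: "ennreal \<epsilon> * (\<integral>\<^sup>+ u. ennreal (indicator {0..t} u * e u) \<partial>lborel) = ennreal K"
    unfolding K_def using fin[of t] by (simp add: ennreal_mult_eq_top_iff ennreal_enn2real_if)
  have K0: "0 \<le> K" by (simp add: K_def)
  have iterated: "\<forall>s\<in>{0..t}. e s \<le> K * exp (2 * \<epsilon> * s) / 2 ^ n" for n
  proof (induct n)
    case 0
    show ?case
    proof
      fix s assume s: "s \<in> {0..t}"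
      have "ennreal (e s) \<le> ennreal \<epsilon> * (\<integral>\<^sup>+ u. ennreal (indicator {0..s} u * e u) \<partial>lborel)"
        using s by (intro ineq) auto
      also have "\<dots> \<le> ennreal K"
        unfolding Keq[symmetric]
        using s en by (intro mult_left_mono nn_integral_mono ennreal_leI) (auto simp: indicator_def)
      finally have "e s \<le> K" using K0 by (simp add: ennreal_le_iff)
      also have "K \<le> K * exp (2 * \<epsilon> * s)" using K0 eps s by (intro mult_le_cancel_left1[THEN iffD2]) auto
      finally show "e s \<le> K * exp (2 * \<epsilon> * s) / 2 ^ 0" by simp
    qed
  qed (rule gronwall_halving_step[OF eps K0 ineq])
  have "e t \<le> 0"
    by (rule LIMSEQ_le_const[OF LIMSEQ_divide_realpow_zero[of 2 "K * exp (2 * \<epsilon> * t)"]])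
       (use iterated t in auto)
  then show ?thesis using en[of t] by simp
qed

text \<open>On the habit window \<open>[t-\<tau>,t]\<close> with \<open>t \<ge> 0\<close>, the concatenated path splits into the past
  consumption (supported on \<open>[-\<tau>,0)\<close>) and the present consumption (supported on \<open>[0,\<infinity>)\<close>).
  Both pieces are functions on the whole real line, which is what the integration
  library works with.\<close>

definition past_cons :: "real \<Rightarrow> (real \<Rightarrow> real) \<Rightarrow> real \<Rightarrow> real" where
  "past_cons \<tau> c0 u = indicator {-\<tau>..<0} u * c0 u"

definition present_cons :: "(real \<Rightarrow> real) \<Rightarrow> real \<Rightarrow> real" where
  "present_cons c u = indicator {0..} u * c u"

lemma hab_split:
  assumes "0 \<le> t"
  shows "hab \<epsilon> \<eta> \<tau> c0 c t
       = \<epsilon> * (LINT u:{t-\<tau>..t}|lborel. (past_cons \<tau> c0 u + present_cons c u) * exp (\<eta> * (u - t)))"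
  unfolding hab_def
  by (intro arg_cong[where f="\<lambda>x. \<epsilon> * x"] set_lebesgue_integral_cong)
     (use assms in \<open>auto simp: concat_def past_cons_def present_cons_def indicator_def\<close>)

lemma past_cons_integrable:
  "set_integrable lborel {-\<tau>..<0} c0 \<Longrightarrow> integrable lborel (past_cons \<tau> c0)"
  unfolding set_integrable_def past_cons_def by simp

lemma past_cons_nonneg: "(\<forall>u\<in>{-\<tau>..<0}. 0 \<le> c0 u) \<Longrightarrow> 0 \<le> past_cons \<tau> c0 u"
  by (auto simp: past_cons_def indicator_def)

lemma present_cons_measurable:
  assumes "\<forall>T\<ge>0. set_integrable lborel {0..T} c"
  shows "present_cons c \<in> borel_measurable lborel"
proof (rule borel_measurable_LIMSEQ_real)
  show "(\<lambda>n. indicator {0..real n} u * c u) \<longlonglongrightarrow> present_cons c u" for u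
  proof (rule tendsto_eventually)
    obtain N :: nat where "u \<le> real N" using real_arch_simple by blast
    then show "\<forall>\<^sub>F n in sequentially. indicator {0..real n} u * c u = present_cons c u"
      unfolding eventually_sequentially
      by (intro exI[of _ N]) (auto simp: present_cons_def indicator_def)
  qed
  show "(\<lambda>u. indicator {0..real n} u * c u) \<in> borel_measurable lborel" for n
    using assms[rule_format, of "real n"] unfolding set_integrable_def
    by (auto dest: borel_measurable_integrable)
qed

text \<open>The habit integrand is integrable: it is dominated by \<open>|c\<^sub>0| + |c| 1\<^sub>[\<^sub>0\<^sub>,\<^sub>t\<^sub>]\<close>.\<close>

lemma hab_integrand_integrable:
  assumes c0: "set_integrable lborel {-\<tau>..<0} c0" and c: "\<forall>T\<ge>0. set_integrable lborel {0..T} c"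
    and "0 \<le> t" "0 \<le> \<eta>"
  shows "integrable lborel
           (\<lambda>u. indicator {t-\<tau>..t} u * ((past_cons \<tau> c0 u + present_cons c u) * exp (\<eta> * (u - t))))"
proof (rule Bochner_Integration.integrable_bound)
  show "integrable lborel (\<lambda>u. \<bar>past_cons \<tau> c0 u\<bar> + \<bar>indicator {0..t} u * c u\<bar>)"
    using past_cons_integrable[OF c0] c[rule_format, OF \<open>0\<le>t\<close>] unfolding set_integrable_def
    by (intro Bochner_Integration.integrable_add integrable_abs) auto
  have [measurable]: "past_cons \<tau> c0 \<in> borel_measurable lborel" "present_cons c \<in> borel_measurable lborel"
    using borel_measurable_integrable[OF past_cons_integrable[OF c0]] present_cons_measurable[OF c]
    by auto
  show "(\<lambda>u. indicator {t-\<tau>..t} u * ((past_cons \<tau> c0 u + present_cons c u) * exp (\<eta> * (u - t))))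
      \<in> borel_measurable lborel"
    by measurable
  show "AE u in lborel. norm (indicator {t-\<tau>..t} u * ((past_cons \<tau> c0 u + present_cons c u) * exp (\<eta> * (u - t))))
      \<le> norm (\<bar>past_cons \<tau> c0 u\<bar> + \<bar>indicator {0..t} u * c u\<bar>)"
  proof (intro AE_I2)
    fix u
    show "norm (indicator {t-\<tau>..t} u * ((past_cons \<tau> c0 u + present_cons c u) * exp (\<eta> * (u - t))))
      \<le> norm (\<bar>past_cons \<tau> c0 u\<bar> + \<bar>indicator {0..t} u * c u\<bar>)"
    proof (cases "u \<in> {t-\<tau>..t}")
      case True
      then have "exp (\<eta> * (u - t)) \<le> 1" using \<open>0\<le>\<eta>\<close> by (auto simp: mult_nonneg_nonpos)
      then have "\<bar>(past_cons \<tau> c0 u + present_cons c u) * exp (\<eta> * (u - t))\<bar>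
          \<le> \<bar>past_cons \<tau> c0 u + present_cons c u\<bar>"
        by (simp add: abs_mult mult_left_le)
      also have "\<dots> \<le> \<bar>past_cons \<tau> c0 u\<bar> + \<bar>indicator {0..t} u * c u\<bar>"
        using True by (auto simp: present_cons_def indicator_def)
      finally show ?thesis using True by simp
    qed simp
  qed
qed

lemma hab_as_nn_integral:
  assumes c0: "set_integrable lborel {-\<tau>..<0} c0" "\<forall>u\<in>{-\<tau>..<0}. 0 \<le> c0 u"
    and c: "\<forall>T\<ge>0. set_integrable lborel {0..T} c" "\<forall>t\<ge>0. 0 \<le> c t"
    and "0 \<le> t" "0 \<le> \<eta>" "0 \<le> \<epsilon>"
  shows "ennreal (hab \<epsilon> \<eta> \<tau> c0 c t) = ennreal \<epsilon> *
     (\<integral>\<^sup>+ u. ennreal (indicator {t-\<tau>..t} u * ((past_cons \<tau> c0 u + present_cons c u) * exp (\<eta> * (u - t)))) \<partial>lborel)"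
proof -
  let ?f = "\<lambda>u. indicator {t-\<tau>..t} u * ((past_cons \<tau> c0 u + present_cons c u) * exp (\<eta> * (u - t)))"
  have nn: "0 \<le> ?f u" for u
    using past_cons_nonneg[OF c0(2)] c(2) by (auto simp: present_cons_def indicator_def)
  have "(\<integral>\<^sup>+ u. ennreal (?f u) \<partial>lborel) = ennreal (integral\<^sup>L lborel ?f)"
    by (rule nn_integral_eq_integral[OF hab_integrand_integrable[OF c0(1) c(1) assms(5,6)]])
       (use nn in auto)
  moreover have "hab \<epsilon> \<eta> \<tau> c0 c t = \<epsilon> * integral\<^sup>L lborel ?f"
    unfolding hab_split[OF \<open>0\<le>t\<close>] set_lebesgue_integral_def by simp
  moreover have "0 \<le> integral\<^sup>L lborel ?f" using nn by (simp add: integral_nonneg_AE)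
  ultimately show ?thesis using \<open>0\<le>\<epsilon>\<close> by (simp add: ennreal_mult)
qed

lemma hab_nonneg:
  assumes "\<forall>u\<in>{-\<tau>..<0}. 0 \<le> c0 u" "\<forall>t\<ge>0. 0 \<le> c t" "0 \<le> t" "0 \<le> \<epsilon>"
  shows "0 \<le> hab \<epsilon> \<eta> \<tau> c0 c t"
  unfolding hab_def set_lebesgue_integral_def
  by (intro mult_nonneg_nonneg assms(4) integral_nonneg_AE AE_I2)
     (use assms in \<open>auto simp: indicator_def concat_def\<close>)

text \<open>The habit operator acting on \<open>ennreal\<close>-valued paths: a path \<open>c \<ge> 0\<close> on \<open>[0,\<infinity>)\<close> solves
  \<open>c = h(c)\<close> iff it is a fixed point of this monotone operator.  Working in \<open>ennreal\<close>
  makes monotone convergence available without integrability side conditions.\<close>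

definition habit_op ::
  "real \<Rightarrow> real \<Rightarrow> real \<Rightarrow> (real \<Rightarrow> real) \<Rightarrow> (real \<Rightarrow> ennreal) \<Rightarrow> real \<Rightarrow> ennreal" where
  "habit_op \<epsilon> \<eta> \<tau> c0 f t = (if t < 0 then 0 else ennreal \<epsilon> *
     (\<integral>\<^sup>+ u. ennreal (if t - \<tau> \<le> u \<and> u \<le> t then exp (\<eta> * (u - t)) else 0) *
        (ennreal (past_cons \<tau> c0 u) + (if 0 \<le> u then f u else 0)) \<partial>lborel))"

lemma habit_op_mono: "(\<And>u. f u \<le> g u) \<Longrightarrow> habit_op \<epsilon> \<eta> \<tau> c0 f t \<le> habit_op \<epsilon> \<eta> \<tau> c0 g t"
  unfolding habit_op_def
  by (auto intro!: mult_left_mono nn_integral_mono add_left_mono)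

lemma habit_op_measurable:
  assumes [measurable]: "past_cons \<tau> c0 \<in> borel_measurable borel" "f \<in> borel_measurable borel"
  shows "habit_op \<epsilon> \<eta> \<tau> c0 f \<in> borel_measurable borel"
  unfolding habit_op_def by measurable

text \<open>Existence of the habit solution: the Kleene iterates of the habit operator started
  at \<open>0\<close> increase to its least fixed point, which is finite because it stays below the
  exponential supersolution \<open>(2\<epsilon>C\<^sub>0 + 1) e^(2\<epsilon>t)\<close>, \<open>C\<^sub>0 = \<integral> c\<^sub>0\<close>.\<close>

context
  fixes \<epsilon> \<eta> \<tau> :: real and c0 :: "real \<Rightarrow> real"
  assumes eps: "0 < \<epsilon>" and eta: "0 < \<eta>"
    and c0i: "set_integrable lborel {-\<tau>..<0} c0" and c0n: "\<forall>u\<in>{-\<tau>..<0}. 0 \<le> c0 u"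
begin

definition habit_iter :: "nat \<Rightarrow> real \<Rightarrow> ennreal" where
  "habit_iter n = (habit_op \<epsilon> \<eta> \<tau> c0 ^^ n) (\<lambda>_. 0)"

definition habit_lfp :: "real \<Rightarrow> ennreal" where
  "habit_lfp t = (SUP n. habit_iter n t)"

lemma past_cons_measurable[measurable]: "past_cons \<tau> c0 \<in> borel_measurable borel"
  using borel_measurable_integrable[OF past_cons_integrable[OF c0i]] by simp

lemma habit_iter_Suc: "habit_iter (Suc n) = habit_op \<epsilon> \<eta> \<tau> c0 (habit_iter n)"
  by (simp add: habit_iter_def)

lemma habit_iter_measurable[measurable]: "habit_iter n \<in> borel_measurable borel"
  by (induct n) (auto simp: habit_iter_def intro!: habit_op_measurable)

lemma habit_iter_incseq: "incseq (\<lambda>n. habit_iter n t)"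
proof (rule incseq_SucI)
  show "habit_iter n t \<le> habit_iter (Suc n) t" for n
  proof (induct n arbitrary: t)
    case 0 show ?case by (simp add: habit_iter_def)
  next
    case (Suc n) show ?case
      unfolding habit_iter_Suc[of "Suc n"] habit_iter_Suc[of n]
      by (rule habit_op_mono) (metis Suc habit_iter_Suc)
  qed
qed

lemma habit_lfp_measurable[measurable]: "habit_lfp \<in> borel_measurable borel"
  unfolding habit_lfp_def by measurable

lemma habit_lfp_fixpoint: "habit_op \<epsilon> \<eta> \<tau> c0 habit_lfp t = habit_lfp t"
proof (cases "t < 0")
  case True
  have "habit_iter n t = 0" for n by (cases n) (simp_all add: habit_iter_def habit_op_def True)
  then show ?thesis using True by (simp add: habit_op_def habit_lfp_def)
next
  case False
  let ?E = "\<lambda>u. ennreal (if t - \<tau> \<le> u \<and> u \<le> t then exp (\<eta> * (u - t)) else 0)"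
  let ?h = "\<lambda>n u. ?E u * (ennreal (past_cons \<tau> c0 u) + (if 0 \<le> u then habit_iter n u else 0))"
  have pw: "?E u * (ennreal (past_cons \<tau> c0 u) + (if 0 \<le> u then habit_lfp u else 0)) = (SUP n. ?h n u)" for u
    by (cases "0 \<le> u") (simp_all add: habit_lfp_def ennreal_SUP_add_right SUP_mult_left_ennreal)
  have inc: "incseq ?h"
    using habit_iter_incseq
    by (auto simp: incseq_def le_fun_def intro!: mult_left_mono add_left_mono)
  have "habit_op \<epsilon> \<eta> \<tau> c0 habit_lfp t = ennreal \<epsilon> * (\<integral>\<^sup>+ u. (SUP n. ?h n u) \<partial>lborel)"
    using False by (simp add: habit_op_def pw)
  also have "\<dots> = ennreal \<epsilon> * (SUP n. \<integral>\<^sup>+ u. ?h n u \<partial>lborel)"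
    by (subst nn_integral_monotone_convergence_SUP[OF inc]) auto
  also have "\<dots> = (SUP n. habit_iter (Suc n) t)"
    using False by (simp add: SUP_mult_left_ennreal habit_iter_Suc habit_op_def)
  also have "\<dots> = habit_lfp t"
    unfolding habit_lfp_def
  proof (intro antisym SUP_least)
    show "habit_iter (Suc n) t \<le> (SUP n. habit_iter n t)" for n by (rule SUP_upper) simp
    show "habit_iter n t \<le> (SUP n. habit_iter (Suc n) t)" for n
      using habit_iter_incseq[of t] by (intro SUP_upper2[of n]) (auto simp: incseq_Suc_iff)
  qed
  finally show ?thesis .
qed

definition past_mass :: real where
  "past_mass = integral\<^sup>L lborel (past_cons \<tau> c0)"

definition majorant :: "real \<Rightarrow> ennreal" where
  "majorant u = ennreal ((2 * \<epsilon> * past_mass + 1) * exp (2 * \<epsilon> * u))"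

lemma past_mass: "(\<integral>\<^sup>+ u. ennreal (past_cons \<tau> c0 u) \<partial>lborel) = ennreal past_mass" "0 \<le> past_mass"
  unfolding past_mass_def
  by (auto intro!: nn_integral_eq_integral past_cons_integrable[OF c0i] integral_nonneg_AE
           simp: past_cons_nonneg[OF c0n])

lemma majorant_supersolution: "habit_op \<epsilon> \<eta> \<tau> c0 majorant t \<le> majorant t"
proof (cases "t < 0")
  case True then show ?thesis by (simp add: habit_op_def)
next
  case False
  then have t: "0 \<le> t" by simp
  define B where "B = 2 * \<epsilon> * past_mass + 1"
  have B: "0 < B" using past_mass(2) eps unfolding B_def by (intro add_nonneg_pos) simp_all
  have L: "0 < 2 * \<epsilon>" using eps by simp
  let ?E = "\<lambda>u. ennreal (if t - \<tau> \<le> u \<and> u \<le> t then exp (\<eta> * (u - t)) else 0)"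
  have pw: "?E u * (ennreal (past_cons \<tau> c0 u) + (if 0 \<le> u then majorant u else 0))
       \<le> ennreal (past_cons \<tau> c0 u) + ennreal (indicator {0..t} u * (B * exp (2 * \<epsilon> * u)))" for u
  proof (cases "t - \<tau> \<le> u \<and> u \<le> t")
    case True
    then have "exp (\<eta> * (u - t)) \<le> 1" using eta by (auto simp: mult_nonneg_nonpos)
    then have "?E u * (ennreal (past_cons \<tau> c0 u) + (if 0 \<le> u then majorant u else 0))
        \<le> 1 * (ennreal (past_cons \<tau> c0 u) + (if 0 \<le> u then majorant u else 0))"
      using True by (intro mult_right_mono) auto
    also have "\<dots> = ennreal (past_cons \<tau> c0 u) + ennreal (indicator {0..t} u * (B * exp (2 * \<epsilon> * u)))"
      using True by (auto simp: majorant_def B_def indicator_def)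
    finally show ?thesis .
  next
    case False
    then have "?E u = 0" by (simp only: if_not_P if_False ennreal_0)
    then show ?thesis by simp
  qed
  have "habit_op \<epsilon> \<eta> \<tau> c0 majorant t \<le> ennreal \<epsilon> *
     (\<integral>\<^sup>+ u. ennreal (past_cons \<tau> c0 u) + ennreal (indicator {0..t} u * (B * exp (2 * \<epsilon> * u))) \<partial>lborel)"
    unfolding habit_op_def using t by (auto intro!: mult_left_mono nn_integral_mono pw)
  also have "\<dots> = ennreal \<epsilon> * (ennreal past_mass + ennreal (B * (exp (2 * \<epsilon> * t) - 1) / (2 * \<epsilon>)))"
    by (subst nn_integral_add) (auto simp: past_mass nn_integral_exp_Icc[OF L less_imp_le[OF B] t])
  also have "\<dots> = ennreal (\<epsilon> * (past_mass + B * (exp (2 * \<epsilon> * t) - 1) / (2 * \<epsilon>)))"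
  proof -
    have "0 \<le> B * (exp (2 * \<epsilon> * t) - 1) / (2 * \<epsilon>)" using B L t by simp
    then show ?thesis using past_mass(2) eps
      by (simp add: ennreal_mult' ennreal_plus[symmetric] del: ennreal_plus)
  qed
  also have "\<dots> \<le> majorant t"
    unfolding majorant_def B_def[symmetric]
  proof (rule ennreal_leI)
    have "\<epsilon> * (past_mass + B * (exp (2 * \<epsilon> * t) - 1) / (2 * \<epsilon>))
        = B * exp (2 * \<epsilon> * t) / 2 - 1 / 2"
      using eps by (simp add: B_def field_simps)
    also have "\<dots> \<le> B * exp (2 * \<epsilon> * t)" using B by (simp add: field_simps)
    finally show "\<epsilon> * (past_mass + B * (exp (2 * \<epsilon> * t) - 1) / (2 * \<epsilon>)) \<le> B * exp (2 * \<epsilon> * t)" .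
  qed
  finally show ?thesis .
qed

lemma habit_lfp_le_majorant: "habit_lfp t \<le> majorant t"
  unfolding habit_lfp_def
proof (rule SUP_least)
  show "habit_iter n t \<le> majorant t" for n
  proof (induct n arbitrary: t)
    case (Suc n)
    have "habit_iter (Suc n) t \<le> habit_op \<epsilon> \<eta> \<tau> c0 majorant t"
      unfolding habit_iter_Suc by (rule habit_op_mono) (rule Suc)
    also have "\<dots> \<le> majorant t" by (rule majorant_supersolution)
    finally show ?case .
  qed (simp add: habit_iter_def)
qed

definition habit_solution :: "real \<Rightarrow> real" where
  "habit_solution t = (if t < 0 then 0 else enn2real (habit_lfp t))"

lemma habit_lfp_eq: "0 \<le> t \<Longrightarrow> habit_lfp t = ennreal (habit_solution t)"
  using habit_lfp_le_majorant[of t]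
  by (auto simp: habit_solution_def majorant_def ennreal_enn2real_if top_unique)

lemma habit_solution_nonneg: "0 \<le> habit_solution t"
  by (simp add: habit_solution_def)

lemma habit_solution_negative: "t < 0 \<Longrightarrow> habit_solution t = 0"
  by (simp add: habit_solution_def)

lemma habit_solution_measurable[measurable]: "habit_solution \<in> borel_measurable borel"
  unfolding habit_solution_def by measurable

lemma habit_solution_integrable: "set_integrable lborel {0..T} habit_solution"
proof (rule set_integrable_bound[where f="\<lambda>_. (2 * \<epsilon> * past_mass + 1) * exp (2 * \<epsilon> * T)"])
  show "set_integrable lborel {0..T} (\<lambda>_. (2 * \<epsilon> * past_mass + 1) * exp (2 * \<epsilon> * T))"
    unfolding set_integrable_def
    by (intro integrable_scaleR_left integrable_real_indicator) (auto simp: emeasure_lborel_Icc_eq)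
  show "set_borel_measurable lborel {0..T} habit_solution"
    unfolding set_borel_measurable_def by measurable
  show "AE x in lborel. x \<in> {0..T} \<longrightarrow>
      norm (habit_solution x) \<le> norm ((2 * \<epsilon> * past_mass + 1) * exp (2 * \<epsilon> * T))"
  proof (intro AE_I2 impI)
    fix x assume x: "x \<in> {0..T}"
    have B: "0 < 2 * \<epsilon> * past_mass + 1" using past_mass(2) eps by (intro add_nonneg_pos) simp_all
    have "habit_solution x \<le> (2 * \<epsilon> * past_mass + 1) * exp (2 * \<epsilon> * x)"
      using habit_lfp_le_majorant[of x] habit_lfp_eq[of x] x B by (simp add: majorant_def ennreal_le_iff)
    also have "\<dots> \<le> (2 * \<epsilon> * past_mass + 1) * exp (2 * \<epsilon> * T)" using x B eps by auto
    finally show "norm (habit_solution x) \<le> norm ((2 * \<epsilon> * past_mass + 1) * exp (2 * \<epsilon> * T))"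
      using habit_solution_nonneg[of x] B by simp
  qed
qed

lemma habit_solution_fixpoint: "0 \<le> t \<Longrightarrow> hab \<epsilon> \<eta> \<tau> c0 habit_solution t = habit_solution t"
proof -
  assume t: "0 \<le> t"
  have "ennreal (hab \<epsilon> \<eta> \<tau> c0 habit_solution t) = ennreal \<epsilon> *
     (\<integral>\<^sup>+ u. ennreal (indicator {t-\<tau>..t} u *
        ((past_cons \<tau> c0 u + present_cons habit_solution u) * exp (\<eta> * (u - t)))) \<partial>lborel)"
    by (rule hab_as_nn_integral[OF c0i c0n _ _ t])
       (use habit_solution_integrable habit_solution_nonneg eta eps in auto)
  also have "\<dots> = habit_op \<epsilon> \<eta> \<tau> c0 habit_lfp t"
    unfolding habit_op_def using t
  proof (simp, intro arg_cong[where f="\<lambda>x. ennreal \<epsilon> * x"] nn_integral_cong)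
    fix u
    show "ennreal (indicator {t-\<tau>..t} u * ((past_cons \<tau> c0 u + present_cons habit_solution u) * exp (\<eta> * (u - t)))) =
      ennreal (if t - \<tau> \<le> u \<and> u \<le> t then exp (\<eta> * (u - t)) else 0) *
        (ennreal (past_cons \<tau> c0 u) + (if 0 \<le> u then habit_lfp u else 0))"
      using past_cons_nonneg[OF c0n, of u] habit_solution_nonneg[of u] habit_lfp_eq[of u]
      by (auto simp: indicator_def present_cons_def ennreal_mult'' ennreal_plus mult.commute)
  qed
  also have "\<dots> = ennreal (habit_solution t)"
    by (simp add: habit_lfp_fixpoint habit_lfp_eq[OF t])
  moreover have "0 \<le> hab \<epsilon> \<eta> \<tau> c0 habit_solution t"
    by (rule hab_nonneg[OF c0n]) (use habit_solution_nonneg t eps in auto)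
  ultimately show ?thesis using habit_solution_nonneg[of t] by (simp add: ennreal_inj)
qed

end

text \<open>The habit integrands of two solutions differ only in the present part,
  and \<open>e^(\<eta>(u-t)) \<le> 1\<close> on the window, so \<open>|c - d|\<close> satisfies the hypothesis of the
  zero-forcing Gronwall lemma.\<close>

lemma habit_difference_bound:
  assumes eps: "0 < \<epsilon>" and eta: "0 < \<eta>" and c0i: "set_integrable lborel {-\<tau>..<0} c0"
    and ci: "\<forall>T\<ge>0. set_integrable lborel {0..T} c" and c: "\<forall>t\<ge>0. c t = hab \<epsilon> \<eta> \<tau> c0 c t"
    and di: "\<forall>T\<ge>0. set_integrable lborel {0..T} d" and d: "\<forall>t\<ge>0. d t = hab \<epsilon> \<eta> \<tau> c0 d t"
    and t: "0 \<le> t"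
  shows "ennreal \<bar>c t - d t\<bar> \<le> ennreal \<epsilon> * (\<integral>\<^sup>+ u. ennreal (indicator {0..t} u * \<bar>c u - d u\<bar>) \<partial>lborel)"
proof -
  let ?fc = "\<lambda>u. indicator {t-\<tau>..t} u * ((past_cons \<tau> c0 u + present_cons c u) * exp (\<eta> * (u - t)))"
  let ?fd = "\<lambda>u. indicator {t-\<tau>..t} u * ((past_cons \<tau> c0 u + present_cons d u) * exp (\<eta> * (u - t)))"
  let ?g = "\<lambda>u. indicator {0..t} u * \<bar>c u - d u\<bar>"
  have ic: "integrable lborel ?fc" and id: "integrable lborel ?fd"
    using hab_integrand_integrable[OF c0i ci t] hab_integrand_integrable[OF c0i di t] eta by auto
  have ig: "integrable lborel ?g"
  proof -
    have "integrable lborel (\<lambda>u. \<bar>indicator {0..t} u * c u - indicator {0..t} u * d u\<bar>)"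
      using ci di t unfolding set_integrable_def by (intro integrable_abs Bochner_Integration.integrable_diff) auto
    moreover have "(\<lambda>u. \<bar>indicator {0..t} u * c u - indicator {0..t} u * d u\<bar>) = ?g"
      by (auto simp: indicator_def)
    ultimately show ?thesis by simp
  qed
  have "c t - d t = \<epsilon> * integral\<^sup>L lborel ?fc - \<epsilon> * integral\<^sup>L lborel ?fd"
    using c d t hab_split[OF t, of \<epsilon> \<eta> \<tau> c0] by (simp add: set_lebesgue_integral_def)
  also have "\<dots> = \<epsilon> * integral\<^sup>L lborel (\<lambda>u. ?fc u - ?fd u)"
    using ic id by (simp add: right_diff_distrib)
  finally have diff: "c t - d t = \<epsilon> * integral\<^sup>L lborel (\<lambda>u. ?fc u - ?fd u)" .
  have "\<bar>integral\<^sup>L lborel (\<lambda>u. ?fc u - ?fd u)\<bar> \<le> integral\<^sup>L lborel ?g"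
  proof (rule integral_abs_bound_integral)
    show "\<bar>?fc u - ?fd u\<bar> \<le> ?g u" for u
    proof (cases "u \<in> {t-\<tau>..t}")
      case True
      then have "exp (\<eta> * (u - t)) \<le> 1" using eta by (auto simp: mult_nonneg_nonpos)
      moreover have "?fc u - ?fd u = (present_cons c u - present_cons d u) * exp (\<eta> * (u - t))"
        using True by (simp add: algebra_simps)
      ultimately have "\<bar>?fc u - ?fd u\<bar> \<le> \<bar>present_cons c u - present_cons d u\<bar>"
        by (simp add: abs_mult mult_left_le)
      also have "\<dots> = ?g u" using True by (auto simp: present_cons_def indicator_def)
      finally show ?thesis .
    qed (simp add: indicator_def)
  qed (use ic id ig in auto)
  then have "\<bar>c t - d t\<bar> \<le> \<epsilon> * integral\<^sup>L lborel ?g" using diff eps by (simp add: abs_mult)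
  moreover have "(\<integral>\<^sup>+ u. ennreal (?g u) \<partial>lborel) = ennreal (integral\<^sup>L lborel ?g)"
    by (rule nn_integral_eq_integral[OF ig]) simp
  moreover have "0 \<le> integral\<^sup>L lborel ?g" by (simp add: integral_nonneg_AE)
  ultimately show ?thesis using eps by (simp add: ennreal_mult[symmetric] ennreal_leI)
qed

lemma habit_solution_unique:
  assumes eps: "0 < \<epsilon>" and eta: "0 < \<eta>" and c0i: "set_integrable lborel {-\<tau>..<0} c0"
    and c: "\<forall>t<0. c t = 0" "\<forall>T\<ge>0. set_integrable lborel {0..T} c" "\<forall>t\<ge>0. c t = hab \<epsilon> \<eta> \<tau> c0 c t"
    and d: "\<forall>t<0. d t = 0" "\<forall>T\<ge>0. set_integrable lborel {0..T} d" "\<forall>t\<ge>0. d t = hab \<epsilon> \<eta> \<tau> c0 d t"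
  shows "c = d"
proof
  fix t
  have fin: "(\<integral>\<^sup>+ u. ennreal (indicator {0..T} u * \<bar>c u - d u\<bar>) \<partial>lborel) < top" for T
  proof (cases "0 \<le> T")
    case True
    then have "set_integrable lborel {0..T} (\<lambda>u. \<bar>c u - d u\<bar>)"
      using c(2) d(2) by (intro set_integrable_abs set_integral_diff) auto
    then show ?thesis
      unfolding set_integrable_def by (subst nn_integral_eq_integral) auto
  qed simp
  show "c t = d t"
  proof (cases "t < 0")
    case True then show ?thesis using c(1) d(1) by simp
  next
    case False
    have "\<bar>c t - d t\<bar> = 0"
      by (rule gronwall_zero[OF eps _ habit_difference_bound[OF eps eta c0i c(2,3) d(2,3)] fin])
         (use False in auto)
    then show ?thesis by simp
  qed
qed

lemma cm_eq_habit_solution: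
  assumes "0 < \<epsilon>" "0 < \<eta>"
    and c0i: "set_integrable lborel {-\<tau>..<0} c0" and "\<forall>u\<in>{-\<tau>..<0}. 0 \<le> c0 u"
  shows "cm \<epsilon> \<eta> \<tau> c0 = habit_solution \<epsilon> \<eta> \<tau> c0"
  unfolding cm_def
proof (rule the1_equality)
  let ?P = "\<lambda>c. (\<forall>t<0. c t = 0) \<and> (\<forall>T\<ge>0. set_integrable lborel {0..T} c) \<and> (\<forall>t\<ge>0. c t = hab \<epsilon> \<eta> \<tau> c0 c t)"
  show "?P (habit_solution \<epsilon> \<eta> \<tau> c0)"
    using habit_solution_integrable[OF assms] habit_solution_fixpoint[OF assms]
      habit_solution_negative[OF assms] by auto
  then show "\<exists>!c. ?P c"
    using habit_solution_unique[OF assms(1,2) c0i] by blast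
qed

lemma cm_properties:
  assumes "0 < \<epsilon>" "0 < \<eta>"
    and "set_integrable lborel {-\<tau>..<0} c0" "\<forall>u\<in>{-\<tau>..<0}. 0 \<le> c0 u"
  shows "\<forall>T\<ge>0. set_integrable lborel {0..T} (cm \<epsilon> \<eta> \<tau> c0)"
    and "\<forall>t\<ge>0. hab \<epsilon> \<eta> \<tau> c0 (cm \<epsilon> \<eta> \<tau> c0) t = cm \<epsilon> \<eta> \<tau> c0 t"
    and "\<forall>t. 0 \<le> cm \<epsilon> \<eta> \<tau> c0 t"
  unfolding cm_eq_habit_solution[OF assms]
  using habit_solution_integrable[OF assms] habit_solution_fixpoint[OF assms]
    habit_solution_nonneg[OF assms] by auto

text \<open>Discounting by \<open>e^(-(A-\<delta>)t)\<close> turns the capital equation into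
  \<open>k(t) = e^((A-\<delta>)t) (k\<^sub>0 - \<integral>\<^sub>0\<^sup>t e^(-(A-\<delta>)u) c(u) du)\<close>, so \<open>k \<ge> 0\<close> on \<open>[0,\<infinity>)\<close> means
  exactly that the discounted consumption never exceeds \<open>k\<^sub>0\<close>.\<close>

lemma weighted_set_integrable:
  fixes c :: "real \<Rightarrow> real"
  assumes ci: "set_integrable lborel {0..t} c"
  shows "set_integrable lborel {0..t} (\<lambda>u. exp (b * u) * c u)"
proof (rule set_integrable_bound[where f="\<lambda>u. exp (\<bar>b\<bar> * t) * c u"])
  show "set_integrable lborel {0..t} (\<lambda>u. exp (\<bar>b\<bar> * t) * c u)" using ci by simp
  have "(\<lambda>x. indicator {0..t} x * c x) \<in> borel_measurable lborel"
    using borel_measurable_integrable[OF ci[unfolded set_integrable_def]] by simp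
  then have "(\<lambda>x. exp (b * x) * (indicator {0..t} x * c x)) \<in> borel_measurable lborel"
    by measurable
  then show "set_borel_measurable lborel {0..t} (\<lambda>u. exp (b * u) * c u)"
    unfolding set_borel_measurable_def by (simp add: mult_ac)
  show "AE x in lborel. x \<in> {0..t} \<longrightarrow> norm (exp (b * x) * c x) \<le> norm (exp (\<bar>b\<bar> * t) * c x)"
  proof (intro AE_I2 impI)
    fix x assume x: "x \<in> {0..t}"
    have "b * x \<le> \<bar>b\<bar> * t" using x
      by (metis abs_ge_self abs_mult abs_of_nonneg atLeastAtMost_iff dual_order.trans mult_left_mono abs_ge_zero)
    then show "norm (exp (b * x) * c x) \<le> norm (exp (\<bar>b\<bar> * t) * c x)"
      by (simp add: abs_mult mult_right_mono)
  qed
qed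

lemma capital_discounted:
  "capital A \<delta> k0 c t = exp ((A - \<delta>) * t) * (k0 - (LINT u:{0..t}|lborel. exp (- (A - \<delta>) * u) * c u))"
proof -
  have "(LINT u:{0..t}|lborel. exp ((A - \<delta>) * (t - u)) * c u) =
      (LINT u:{0..t}|lborel. exp ((A - \<delta>) * t) * (exp (- (A - \<delta>) * u) * c u))"
  proof (intro set_lebesgue_integral_cong allI impI)
    fix u
    have "exp ((A - \<delta>) * (t - u)) = exp ((A - \<delta>) * t) * exp (- (A - \<delta>) * u)"
      by (simp add: mult_exp_exp algebra_simps)
    then show "exp ((A - \<delta>) * (t - u)) * c u = exp ((A - \<delta>) * t) * (exp (- (A - \<delta>) * u) * c u)" by simp
  qed simp
  then show ?thesis unfolding capital_def by (simp add: right_diff_distrib mult.commute)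
qed

lemma capital_nonneg_iff:
  fixes c :: "real \<Rightarrow> real"
  assumes ci: "set_integrable lborel {0..t} c" and cn: "\<And>u. 0 \<le> u \<Longrightarrow> 0 \<le> c u" and k0: "0 \<le> k0"
  shows "0 \<le> capital A \<delta> k0 c t \<longleftrightarrow>
    (\<integral>\<^sup>+ u. ennreal (indicator {0..t} u * (exp (- (A - \<delta>) * u) * c u)) \<partial>lborel) \<le> ennreal k0"
proof -
  have "integrable lborel (\<lambda>u. indicator {0..t} u * (exp (- (A - \<delta>) * u) * c u))"
    using weighted_set_integrable[OF ci] unfolding set_integrable_def by simp
  then have "(\<integral>\<^sup>+ u. ennreal (indicator {0..t} u * (exp (- (A - \<delta>) * u) * c u)) \<partial>lborel) =
      ennreal (LINT u:{0..t}|lborel. exp (- (A - \<delta>) * u) * c u)"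
    unfolding set_lebesgue_integral_def
    by (subst nn_integral_eq_integral) (auto simp: indicator_def cn)
  then show ?thesis unfolding capital_discounted using k0 by (simp add: zero_le_mult_iff ennreal_le_iff)
qed

lemma discounted_consumption_le:
  fixes c :: "real \<Rightarrow> real"
  assumes ci: "\<forall>T\<ge>0. set_integrable lborel {0..T} c" and cn: "\<forall>t\<ge>0. 0 \<le> c t"
    and cap: "\<forall>t\<ge>0. 0 \<le> capital A \<delta> k0 c t" and k0: "0 \<le> k0"
  shows "(\<integral>\<^sup>+ u. ennreal (exp (- (A - \<delta>) * u) * c u) * indicator {0..} u \<partial>lborel) \<le> ennreal k0"
proof -
  let ?f = "\<lambda>n u. ennreal (indicator {0..real n} u * (exp (- (A - \<delta>) * u) * c u))"
  have meas: "?f n \<in> borel_measurable lborel" for n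
  proof -
    have "(\<lambda>u. indicator {0..real n} u * c u) \<in> borel_measurable lborel"
      using borel_measurable_integrable[OF ci[rule_format, of "real n", unfolded set_integrable_def]] by simp
    then have "(\<lambda>u. exp (- (A - \<delta>) * u) * (indicator {0..real n} u * c u)) \<in> borel_measurable lborel"
      by measurable
    then show ?thesis by (simp add: mult_ac)
  qed
  have inc: "incseq ?f"
    unfolding incseq_def le_fun_def
    using cn by (auto intro!: ennreal_leI mult_right_mono simp: indicator_def)
  have sup: "(SUP n. ?f n u) = ennreal (exp (- (A - \<delta>) * u) * c u) * indicator {0..} u" for u
  proof (cases "0 \<le> u")
    case True
    obtain N :: nat where N: "u \<le> real N" using real_arch_simple by blast
    show ?thesis
    proof (rule antisym)
      show "(SUP n. ?f n u) \<le> ennreal (exp (- (A - \<delta>) * u) * c u) * indicator {0..} u"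
        using True cn by (intro SUP_least) (auto intro!: ennreal_leI simp: indicator_def)
      show "ennreal (exp (- (A - \<delta>) * u) * c u) * indicator {0..} u \<le> (SUP n. ?f n u)"
        using True N by (intro SUP_upper2[of N]) (auto simp: indicator_def)
    qed
  qed (simp add: indicator_def)
  have "(\<integral>\<^sup>+ u. ennreal (exp (- (A - \<delta>) * u) * c u) * indicator {0..} u \<partial>lborel) = (SUP n. integral\<^sup>N lborel (?f n))"
    unfolding sup[symmetric] by (rule nn_integral_monotone_convergence_SUP[OF inc meas])
  also have "\<dots> \<le> ennreal k0"
    using cap ci cn capital_nonneg_iff[of "real _" c k0 A \<delta>] k0 by (intro SUP_least) auto
  finally show ?thesis .
qed

lemma data_okD:
  assumes "data_ok A \<delta> \<epsilon> \<eta> \<tau> k0 c0"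
  shows "0 < k0" "set_integrable lborel {-\<tau>..<0} c0" "\<forall>u\<in>{-\<tau>..<0}. 0 \<le> c0 u"
    "(\<integral>\<^sup>+ s. ennreal (exp (- (A - \<delta>) * s) * cm \<epsilon> \<eta> \<tau> c0 s) * indicator {0..} s \<partial>lborel) < ennreal k0"
  using assms unfolding data_ok_def by auto

text \<open>The habit solution \<open>c\<^sup>m\<close> is admissible: \<open>c\<^sup>m = h\<close>, and by the data assumption its
  discounted consumption is below \<open>k\<^sub>0\<close>.\<close>

lemma cm_admissible:
  assumes eps: "0 < \<epsilon>" and eta: "0 < \<eta>" and d: "data_ok A \<delta> \<epsilon> \<eta> \<tau> k0 c0"
  shows "cm \<epsilon> \<eta> \<tau> c0 \<in> admissible A \<delta> \<epsilon> \<eta> \<tau> k0 c0"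
proof -
  note D = data_okD[OF d]
  note P = cm_properties[OF eps eta D(2,3)]
  have "0 \<le> capital A \<delta> k0 (cm \<epsilon> \<eta> \<tau> c0) t" if t: "0 \<le> t" for t
  proof -
    have "(\<integral>\<^sup>+ u. ennreal (indicator {0..t} u * (exp (- (A - \<delta>) * u) * cm \<epsilon> \<eta> \<tau> c0 u)) \<partial>lborel) \<le>
        (\<integral>\<^sup>+ s. ennreal (exp (- (A - \<delta>) * s) * cm \<epsilon> \<eta> \<tau> c0 s) * indicator {0..} s \<partial>lborel)"
      by (intro nn_integral_mono) (auto simp: indicator_def)
    also have "\<dots> \<le> ennreal k0" using D(4) by simp
    finally show ?thesis using capital_nonneg_iff[of t "cm \<epsilon> \<eta> \<tau> c0" k0 A \<delta>] P(1,3) D(1) t by simp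
  qed
  then show ?thesis unfolding admissible_def using P by auto
qed

text \<open>With \<open>\<beta> = (\<rho> - (A-\<delta>)(1-\<gamma>))/\<gamma> > 0\<close>, Young's inequality
  \<open>Y^(1-\<gamma>) Z^\<gamma> \<le> (1-\<gamma>)Y + \<gamma>Z\<close> applied to \<open>Y = e^(-(A-\<delta>)t) c\<close> and \<open>Z = s e^(-\<beta>t)\<close>
  splits the discounted utility into a discounted-consumption term and an integrable
  exponential term.\<close>

definition young_const :: "real \<Rightarrow> real \<Rightarrow> real \<Rightarrow> real" where
  "young_const \<rho> a \<gamma> = ((\<rho> - a * (1 - \<gamma>)) / \<gamma>) powr (- \<gamma>) / (1 - \<gamma>)"

lemma young_const_pos:
  "0 < \<gamma> \<Longrightarrow> \<gamma> < 1 \<Longrightarrow> a * (1 - \<gamma>) < \<rho> \<Longrightarrow> 0 < young_const \<rho> a \<gamma>"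
  unfolding young_const_def by (intro divide_pos_pos) auto

lemma discounted_utility_young:
  fixes \<gamma> s \<beta> \<rho> a x c t :: real
  assumes g: "0 < \<gamma>" "\<gamma> < 1" and s: "0 < s"
    and rdef: "\<beta> * \<gamma> = \<rho> - a * (1 - \<gamma>)" and x: "0 \<le> x" "x \<le> c"
  shows "util \<gamma> x * exp (- \<rho> * t)
       \<le> exp (- a * t) * c / s powr \<gamma> + \<gamma> * s / ((1 - \<gamma>) * s powr \<gamma>) * exp (- \<beta> * t)"
proof -
  define p where "p = 1 - \<gamma>"
  have p: "0 < p" "p + \<gamma> = 1" using g by (auto simp: p_def)
  define Y where "Y = exp (- a * t) * c"
  define Z where "Z = s * exp (- \<beta> * t)"
  have Y0: "0 \<le> Y" using x by (simp add: Y_def)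
  have Z0: "0 < Z" using s by (simp add: Z_def)
  have young: "Y powr p * Z powr \<gamma> \<le> p * Y + \<gamma> * Z"
    using Youngs_inequality_0[of p \<gamma> Y Z] p Y0 Z0 g by (cases "Y = 0") auto
  have "c powr p * exp (- \<rho> * t) = Y powr p * exp (a * t * p - \<rho> * t)"
    unfolding Y_def powr_mult exp_powr_real using x by (simp add: mult_exp_exp algebra_simps)
  also have "a * t * p - \<rho> * t = - \<beta> * t * \<gamma>"
    using arg_cong[OF rdef, of "\<lambda>z. z * t"] by (simp add: p_def algebra_simps)
  also have "Y powr p * exp (- \<beta> * t * \<gamma>) = Y powr p * Z powr \<gamma> / s powr \<gamma>"
    using s by (simp add: Z_def powr_mult exp_powr_real)
  also have "\<dots> \<le> (p * Y + \<gamma> * Z) / s powr \<gamma>"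
    using young s by (simp add: divide_right_mono)
  finally have main: "c powr p * exp (- \<rho> * t) \<le> (p * Y + \<gamma> * Z) / s powr \<gamma>" .
  have "util \<gamma> x * exp (- \<rho> * t) = x powr p * exp (- \<rho> * t) / p"
    by (simp add: util_def p_def)
  also have "\<dots> \<le> c powr p * exp (- \<rho> * t) / p"
    using x p by (intro divide_right_mono mult_right_mono powr_mono2) auto
  also have "\<dots> \<le> (p * Y + \<gamma> * Z) / s powr \<gamma> / p"
    using main p by (intro divide_right_mono) auto
  also have "\<dots> = exp (- a * t) * c / s powr \<gamma> + \<gamma> * s / ((1 - \<gamma>) * s powr \<gamma>) * exp (- \<beta> * t)"
    using p s by (simp add: Y_def Z_def p_def field_simps)
  finally show ?thesis .
qed

text \<open>With the scale \<open>s = k\<^sub>0 \<beta>\<close>, the two terms add up to \<open>\<beta>^(-\<gamma>)/(1-\<gamma>) k\<^sub>0^(1-\<gamma>)\<close>.\<close>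

lemma young_scale_identity:
  fixes \<gamma> \<beta> k0 :: real
  assumes g: "0 < \<gamma>" "\<gamma> < 1" and b: "0 < \<beta>" and k0: "0 < k0"
  shows "1 / (k0 * \<beta>) powr \<gamma> * k0 + \<gamma> * (k0 * \<beta>) / ((1 - \<gamma>) * (k0 * \<beta>) powr \<gamma>) / \<beta>
       = \<beta> powr (- \<gamma>) / (1 - \<gamma>) * k0 powr (1 - \<gamma>)"
proof -
  define p where "p = 1 - \<gamma>"
  have p: "0 < p" "p + \<gamma> = 1" using g by (auto simp: p_def)
  have S: "0 < (k0 * \<beta>) powr \<gamma>" using k0 b by simp
  have "1 / (k0 * \<beta>) powr \<gamma> * k0 + \<gamma> * (k0 * \<beta>) / (p * (k0 * \<beta>) powr \<gamma>) / \<beta>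
      = (p + \<gamma>) * k0 / (p * (k0 * \<beta>) powr \<gamma>)"
    using p(1) S b by (simp add: field_simps)
  also have "\<dots> = k0 / (p * (k0 * \<beta>) powr \<gamma>)" using p(2) by simp
  also have "\<dots> = \<beta> powr (- \<gamma>) / p * k0 powr (1 - \<gamma>)"
    using k0 b p by (simp add: powr_mult powr_minus powr_diff field_simps)
  finally show ?thesis by (simp add: p_def)
qed

lemma utility_integral_bound:
  fixes \<gamma> \<rho> \<beta> s K :: real
  assumes g: "0 < \<gamma>" "\<gamma> < 1" and s: "0 < s" and b: "0 < \<beta>"
    and rdef: "\<beta> * \<gamma> = \<rho> - (A - \<delta>) * (1 - \<gamma>)" and K: "K = \<gamma> * s / ((1 - \<gamma>) * s powr \<gamma>)"
    and c: "c \<in> admissible A \<delta> \<epsilon> \<eta> \<tau> k0 c0"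
  shows "(\<integral>\<^sup>+ t. ennreal (util \<gamma> (c t - hab \<epsilon> \<eta> \<tau> c0 c t) * exp (- \<rho> * t)) * indicator {0..} t \<partial>lborel)
       \<le> ennreal (1 / s powr \<gamma>) * (\<integral>\<^sup>+ t. ennreal (exp (- (A - \<delta>) * t) * c t) * indicator {0..} t \<partial>lborel)
         + ennreal (K / \<beta>)"
proof -
  have K0: "0 \<le> K" using g s K by simp
  have c1: "\<forall>t\<ge>0. 0 \<le> c t" and c2: "\<forall>T\<ge>0. set_integrable lborel {0..T} c"
    and c4: "AE t in lborel. 0 \<le> t \<longrightarrow> hab \<epsilon> \<eta> \<tau> c0 c t \<le> c t \<and> 0 \<le> hab \<epsilon> \<eta> \<tau> c0 c t"
    using c by (auto simp: admissible_def)
  let ?f = "\<lambda>t. ennreal (exp (- (A - \<delta>) * t) * c t) * indicator {0..} t"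
  have [measurable]: "present_cons c \<in> borel_measurable lborel" by (rule present_cons_measurable[OF c2])
  have "?f = (\<lambda>t. ennreal (exp (- (A - \<delta>) * t) * present_cons c t))"
    by (auto simp: present_cons_def indicator_def)
  then have fmeas: "?f \<in> borel_measurable lborel" by simp
  have "AE t in lborel. ennreal (util \<gamma> (c t - hab \<epsilon> \<eta> \<tau> c0 c t) * exp (- \<rho> * t)) * indicator {0..} t
      \<le> ennreal (1 / s powr \<gamma>) * ?f t + ennreal (K * exp (- \<beta> * t)) * indicator {0..} t"
  proof (rule AE_mp[OF c4], intro AE_I2 impI)
    fix t assume ht: "0 \<le> t \<longrightarrow> hab \<epsilon> \<eta> \<tau> c0 c t \<le> c t \<and> 0 \<le> hab \<epsilon> \<eta> \<tau> c0 c t"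
    show "ennreal (util \<gamma> (c t - hab \<epsilon> \<eta> \<tau> c0 c t) * exp (- \<rho> * t)) * indicator {0..} t
      \<le> ennreal (1 / s powr \<gamma>) * ?f t + ennreal (K * exp (- \<beta> * t)) * indicator {0..} t"
    proof (cases "0 \<le> t")
      case True
      have "util \<gamma> (c t - hab \<epsilon> \<eta> \<tau> c0 c t) * exp (- \<rho> * t)
          \<le> exp (- (A - \<delta>) * t) * c t / s powr \<gamma> + K * exp (- \<beta> * t)"
        unfolding K using ht True by (intro discounted_utility_young[OF g s rdef]) auto
      then show ?thesis
        using c1 True K0 s
        by (simp add: ennreal_mult[symmetric] ennreal_plus[symmetric] ennreal_leI del: ennreal_plus)
    qed simp
  qed
  then have "(\<integral>\<^sup>+ t. ennreal (util \<gamma> (c t - hab \<epsilon> \<eta> \<tau> c0 c t) * exp (- \<rho> * t)) * indicator {0..} t \<partial>lborel) \<le>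
      (\<integral>\<^sup>+ t. ennreal (1 / s powr \<gamma>) * ?f t + ennreal (K * exp (- \<beta> * t)) * indicator {0..} t \<partial>lborel)"
    by (rule nn_integral_mono_AE)
  also have "\<dots> = ennreal (1 / s powr \<gamma>) * (\<integral>\<^sup>+ t. ?f t \<partial>lborel) + ennreal (K / \<beta>)"
    using fmeas nn_integral_exp_tail[OF b K0] by (subst nn_integral_add) (auto simp: nn_integral_cmult)
  finally show ?thesis .
qed

lemma objective_bound_lt1:
  fixes A \<delta> \<rho> \<gamma> \<epsilon> \<eta> \<tau> k0 :: real
  assumes g: "0 < \<gamma>" "\<gamma> < 1" and rho: "(A - \<delta>) * (1 - \<gamma>) < \<rho>" and k0: "0 < k0"
    and c: "c \<in> admissible A \<delta> \<epsilon> \<eta> \<tau> k0 c0"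
  shows "objective \<gamma> \<rho> \<epsilon> \<eta> \<tau> c0 c \<le> ereal (young_const \<rho> (A - \<delta>) \<gamma> * k0 powr (1 - \<gamma>))"
proof -
  define \<beta> where "\<beta> = (\<rho> - (A - \<delta>) * (1 - \<gamma>)) / \<gamma>"
  define s where "s = k0 * \<beta>"
  define K where "K = \<gamma> * s / ((1 - \<gamma>) * s powr \<gamma>)"
  have b: "0 < \<beta>" using rho g by (simp add: \<beta>_def)
  have s: "0 < s" using k0 b by (simp add: s_def)
  have K: "0 \<le> K" using g s by (simp add: K_def)
  have "(\<integral>\<^sup>+ t. ennreal (util \<gamma> (c t - hab \<epsilon> \<eta> \<tau> c0 c t) * exp (- \<rho> * t)) * indicator {0..} t \<partial>lborel)
      \<le> ennreal (1 / s powr \<gamma>) * (\<integral>\<^sup>+ t. ennreal (exp (- (A - \<delta>) * t) * c t) * indicator {0..} t \<partial>lborel)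
        + ennreal (K / \<beta>)"
    using g by (intro utility_integral_bound[OF g s b _ K_def c]) (simp add: \<beta>_def)
  also have "\<dots> \<le> ennreal (1 / s powr \<gamma>) * ennreal k0 + ennreal (K / \<beta>)"
    using discounted_consumption_le[of c A \<delta> k0] c k0
    by (intro add_right_mono mult_left_mono) (auto simp: admissible_def)
  also have "\<dots> = ennreal (1 / s powr \<gamma> * k0 + K / \<beta>)"
    using k0 s K b by (simp add: ennreal_mult[symmetric] ennreal_plus[symmetric] del: ennreal_plus)
  also have "1 / s powr \<gamma> * k0 + K / \<beta> = young_const \<rho> (A - \<delta>) \<gamma> * k0 powr (1 - \<gamma>)"
    using young_scale_identity[OF g b k0]
    unfolding young_const_def \<beta>_def[symmetric] s_def K_def by simp
  finally have "enn2ereal (\<integral>\<^sup>+ t. ennreal (util \<gamma> (c t - hab \<epsilon> \<eta> \<tau> c0 c t) * exp (- \<rho> * t)) * indicator {0..} t \<partial>lborel)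
      \<le> enn2ereal (ennreal (young_const \<rho> (A - \<delta>) \<gamma> * k0 powr (1 - \<gamma>)))"
    by (simp only: less_eq_ennreal.rep_eq[symmetric])
  then show ?thesis
    unfolding objective_def using g young_const_pos[OF g rho] by simp
qed

lemma value_bounds_lt1:
  assumes "0 < \<epsilon>" "0 < \<eta>" and g: "0 < \<gamma>" "\<gamma> < 1" and rho: "(A - \<delta>) * (1 - \<gamma>) < \<rho>"
    and d: "data_ok A \<delta> \<epsilon> \<eta> \<tau> k0 c0"
  shows "0 \<le> value_fun A \<delta> \<rho> \<gamma> \<epsilon> \<eta> \<tau> k0 c0"
    and "value_fun A \<delta> \<rho> \<gamma> \<epsilon> \<eta> \<tau> k0 c0 \<le> ereal (young_const \<rho> (A - \<delta>) \<gamma> * k0 powr (1 - \<gamma>))"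
proof -
  have "0 \<le> objective \<gamma> \<rho> \<epsilon> \<eta> \<tau> c0 (cm \<epsilon> \<eta> \<tau> c0)"
    using g by (simp add: objective_def)
  also have "\<dots> \<le> value_fun A \<delta> \<rho> \<gamma> \<epsilon> \<eta> \<tau> k0 c0"
    unfolding value_fun_def using cm_admissible[OF assms(1,2) d] by (intro SUP_upper)
  finally show "0 \<le> value_fun A \<delta> \<rho> \<gamma> \<epsilon> \<eta> \<tau> k0 c0" .
  show "value_fun A \<delta> \<rho> \<gamma> \<epsilon> \<eta> \<tau> k0 c0 \<le> ereal (young_const \<rho> (A - \<delta>) \<gamma> * k0 powr (1 - \<gamma>))"
    unfolding value_fun_def
    using objective_bound_lt1[OF g rho data_okD(1)[OF d]] by (intro SUP_least) auto
qed

text \<open>Strict slack in the budget of a control \<open>c\<close> can be spent on a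
  constant extra consumption \<open>B > 0\<close>: half of the slack, times \<open>A - \<delta>\<close>, will do.\<close>

lemma add_const_set_integrable:
  fixes c :: "real \<Rightarrow> real" and B :: real
  assumes "\<forall>T\<ge>0. set_integrable lborel {0..T} c"
  shows "\<forall>T\<ge>0. set_integrable lborel {0..T} (\<lambda>t. c t + B)"
proof (intro allI impI)
  fix T :: real assume "0 \<le> T"
  moreover have "set_integrable lborel {0..T} (\<lambda>_. B)"
    unfolding set_integrable_def
    by (intro integrable_scaleR_left integrable_real_indicator) (auto simp: emeasure_lborel_Icc_eq)
  ultimately show "set_integrable lborel {0..T} (\<lambda>t. c t + B)"
    using assms by (intro set_integral_add) auto
qed

lemma capital_slack:
  fixes c :: "real \<Rightarrow> real"
  assumes a: "0 < A - \<delta>" and ci: "\<forall>T\<ge>0. set_integrable lborel {0..T} c" and cn: "\<forall>t\<ge>0. 0 \<le> c t"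
    and budget: "(\<integral>\<^sup>+ s. ennreal (exp (- (A - \<delta>) * s) * c s) * indicator {0..} s \<partial>lborel) < ennreal k0"
  shows "\<exists>B>0. \<forall>t\<ge>0. 0 \<le> capital A \<delta> k0 (\<lambda>t. c t + B) t"
proof -
  define Ie where "Ie = (\<integral>\<^sup>+ s. ennreal (exp (- (A - \<delta>) * s) * c s) * indicator {0..} s \<partial>lborel)"
  obtain I where IeI: "Ie = ennreal I" and I0: "0 \<le> I"
    using budget unfolding Ie_def by (cases Ie rule: ennreal_cases) (auto simp: Ie_def)
  have Ik: "I < k0" using budget I0 unfolding Ie_def[symmetric] IeI by (simp add: ennreal_less_iff)
  define B where "B = (A - \<delta>) * (k0 - I) / 2"
  have B: "0 < B" using a Ik by (simp add: B_def)
  have [measurable]: "present_cons c \<in> borel_measurable borel"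
    using present_cons_measurable[OF ci] by simp
  have "(\<lambda>u. ennreal (exp (- (A - \<delta>) * u) * c u) * indicator {0..} u)
      = (\<lambda>u. ennreal (exp (- (A - \<delta>) * u) * present_cons c u))"
    by (auto simp: present_cons_def indicator_def)
  then have meas: "(\<lambda>u. ennreal (exp (- (A - \<delta>) * u) * c u) * indicator {0..} u) \<in> borel_measurable borel"
    by simp
  have "0 \<le> capital A \<delta> k0 (\<lambda>t. c t + B) t" if t: "0 \<le> t" for t
  proof -
    have "(\<integral>\<^sup>+ u. ennreal (indicator {0..t} u * (exp (- (A - \<delta>) * u) * (c u + B))) \<partial>lborel) \<le>
        (\<integral>\<^sup>+ u. ennreal (exp (- (A - \<delta>) * u) * c u) * indicator {0..} u +
              ennreal (B * exp (- (A - \<delta>) * u)) * indicator {0..} u \<partial>lborel)"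
    proof (intro nn_integral_mono)
      fix u
      show "ennreal (indicator {0..t} u * (exp (- (A - \<delta>) * u) * (c u + B))) \<le>
         ennreal (exp (- (A - \<delta>) * u) * c u) * indicator {0..} u +
              ennreal (B * exp (- (A - \<delta>) * u)) * indicator {0..} u"
        using cn[rule_format, of u] B
        by (cases "u \<in> {0..t}") (simp_all add: ring_distribs ennreal_plus[symmetric] del: ennreal_plus)
    qed
    also have "\<dots> = Ie + ennreal (B / (A - \<delta>))"
      unfolding Ie_def using nn_integral_exp_tail[OF a less_imp_le[OF B]]
      by (subst nn_integral_add) (use meas in auto)
    also have "B / (A - \<delta>) = (k0 - I) / 2"
    proof -
      have "B = (A - \<delta>) * ((k0 - I) / 2)" by (simp add: B_def)
      then show ?thesis using a by simp
    qed
    also have "Ie + ennreal ((k0 - I) / 2) = ennreal (I + (k0 - I) / 2)"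
      using I0 Ik by (simp add: IeI ennreal_plus)
    also have "\<dots> \<le> ennreal k0" using Ik by (intro ennreal_leI) (simp add: field_simps)
    finally show ?thesis
      using capital_nonneg_iff[of t "\<lambda>t. c t + B" k0 A \<delta>] add_const_set_integrable[OF ci] cn B t I0 Ik
      by simp
  qed
  then show ?thesis using B by blast
qed

text \<open>Raising consumption by the constant \<open>B\<close> raises the habit by at most \<open>B q\<close>, where
  \<open>q = \<epsilon>/\<eta> (1 - e^(-\<eta>\<tau>))\<close> is the habit weight of a unit constant path.\<close>

lemma hab_add_const_le:
  assumes eps: "0 < \<epsilon>" and eta: "0 < \<eta>" and tau: "0 < \<tau>"
    and c0i: "set_integrable lborel {-\<tau>..<0} c0" and c0n: "\<forall>u\<in>{-\<tau>..<0}. 0 \<le> c0 u"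
    and ci: "\<forall>T\<ge>0. set_integrable lborel {0..T} c" and cn: "\<forall>t\<ge>0. 0 \<le> c t"
    and B: "0 \<le> B" and t: "0 \<le> t"
  shows "hab \<epsilon> \<eta> \<tau> c0 (\<lambda>u. c u + B) t \<le> hab \<epsilon> \<eta> \<tau> c0 c t + B * (\<epsilon> / \<eta> * (1 - exp (- \<eta> * \<tau>)))"
proof -
  let ?w = "\<lambda>u. indicator {t-\<tau>..t} u"
  let ?g = "\<lambda>u. ennreal (?w u * ((past_cons \<tau> c0 u + present_cons c u) * exp (\<eta> * (u - t))))"
  have [measurable]: "past_cons \<tau> c0 \<in> borel_measurable borel" "present_cons c \<in> borel_measurable borel"
    using borel_measurable_integrable[OF past_cons_integrable[OF c0i]] present_cons_measurable[OF ci]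
    by auto
  have "ennreal (hab \<epsilon> \<eta> \<tau> c0 (\<lambda>u. c u + B) t) = ennreal \<epsilon> *
     (\<integral>\<^sup>+ u. ennreal (?w u * ((past_cons \<tau> c0 u + present_cons (\<lambda>u. c u + B) u) * exp (\<eta> * (u - t)))) \<partial>lborel)"
    by (rule hab_as_nn_integral[OF c0i c0n add_const_set_integrable[OF ci]])
       (use cn B t eta eps in auto)
  also have "\<dots> \<le> ennreal \<epsilon> * (\<integral>\<^sup>+ u. ?g u + ennreal (?w u * (B * exp (\<eta> * (u - t)))) \<partial>lborel)"
  proof (intro mult_left_mono nn_integral_mono)
    fix u
    have "?w u * ((past_cons \<tau> c0 u + present_cons (\<lambda>u. c u + B) u) * exp (\<eta> * (u - t))) \<le>
        ?w u * ((past_cons \<tau> c0 u + present_cons c u) * exp (\<eta> * (u - t))) + ?w u * (B * exp (\<eta> * (u - t)))"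
      using B by (auto simp: present_cons_def indicator_def ring_distribs)
    then show "ennreal (?w u * ((past_cons \<tau> c0 u + present_cons (\<lambda>u. c u + B) u) * exp (\<eta> * (u - t))))
        \<le> ?g u + ennreal (?w u * (B * exp (\<eta> * (u - t))))"
      using past_cons_nonneg[OF c0n, of u] cn B
      by (simp add: ennreal_plus[symmetric] ennreal_leI present_cons_def indicator_def del: ennreal_plus)
  qed simp
  also have "\<dots> = ennreal \<epsilon> * (\<integral>\<^sup>+ u. ?g u \<partial>lborel) + ennreal \<epsilon> * ennreal (B * (1 - exp (- \<eta> * \<tau>)) / \<eta>)"
    by (subst nn_integral_add) (auto simp: nn_integral_exp_window[OF eta tau B] distrib_left)
  also have "ennreal \<epsilon> * (\<integral>\<^sup>+ u. ?g u \<partial>lborel) = ennreal (hab \<epsilon> \<eta> \<tau> c0 c t)"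
    by (rule hab_as_nn_integral[OF c0i c0n ci cn, symmetric]) (use eta eps t in auto)
  also have "ennreal (hab \<epsilon> \<eta> \<tau> c0 c t) + ennreal \<epsilon> * ennreal (B * (1 - exp (- \<eta> * \<tau>)) / \<eta>)
      = ennreal (hab \<epsilon> \<eta> \<tau> c0 c t + B * (\<epsilon> / \<eta> * (1 - exp (- \<eta> * \<tau>))))"
  proof -
    define q where "q = \<epsilon> / \<eta> * (1 - exp (- \<eta> * \<tau>))"
    have w: "0 \<le> B * (1 - exp (- \<eta> * \<tau>)) / \<eta>" using B eta tau by simp
    have "ennreal \<epsilon> * ennreal (B * (1 - exp (- \<eta> * \<tau>)) / \<eta>) = ennreal (\<epsilon> * (B * (1 - exp (- \<eta> * \<tau>)) / \<eta>))"
      using eps w by (subst ennreal_mult) auto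
    also have "\<epsilon> * (B * (1 - exp (- \<eta> * \<tau>)) / \<eta>) = B * q" by (simp add: q_def)
    finally have "ennreal (hab \<epsilon> \<eta> \<tau> c0 c t) + ennreal \<epsilon> * ennreal (B * (1 - exp (- \<eta> * \<tau>)) / \<eta>)
        = ennreal (hab \<epsilon> \<eta> \<tau> c0 c t + B * q)"
      using hab_nonneg[OF c0n cn t less_imp_le[OF eps]] B eps eta tau
      by (simp add: ennreal_plus q_def)
    then show ?thesis unfolding q_def .
  qed
  finally have "ennreal (hab \<epsilon> \<eta> \<tau> c0 (\<lambda>u. c u + B) t)
      \<le> ennreal (hab \<epsilon> \<eta> \<tau> c0 c t + B * (\<epsilon> / \<eta> * (1 - exp (- \<eta> * \<tau>))))" .
  moreover have "0 \<le> hab \<epsilon> \<eta> \<tau> c0 c t + B * (\<epsilon> / \<eta> * (1 - exp (- \<eta> * \<tau>)))"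
    using hab_nonneg[OF c0n cn t less_imp_le[OF eps]] eps eta tau B by simp
  ultimately show ?thesis by (simp only: ennreal_le_iff)
qed

lemma control_with_habit_margin:
  assumes eps: "0 < \<epsilon>" and eta: "0 < \<eta>" and tau: "0 < \<tau>" and d: "data_ok A \<delta> \<epsilon> \<eta> \<tau> k0 c0"
    and a: "0 < A - \<delta>" and q: "\<epsilon> / \<eta> * (1 - exp (- \<eta> * \<tau>)) < 1"
  shows "\<exists>c m. c \<in> admissible A \<delta> \<epsilon> \<eta> \<tau> k0 c0 \<and> 0 < m \<and> (\<forall>t\<ge>0. m \<le> c t - hab \<epsilon> \<eta> \<tau> c0 c t)"
proof -
  note D = data_okD[OF d]
  note P = cm_properties[OF eps eta D(2,3)]
  let ?q = "\<epsilon> / \<eta> * (1 - exp (- \<eta> * \<tau>))"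
  obtain B where B: "0 < B" and cap: "\<forall>t\<ge>0. 0 \<le> capital A \<delta> k0 (\<lambda>t. cm \<epsilon> \<eta> \<tau> c0 t + B) t"
    using capital_slack[OF a P(1) _ D(4)] P(3) by blast
  let ?c = "\<lambda>t. cm \<epsilon> \<eta> \<tau> c0 t + B"
  have cn: "\<forall>t\<ge>0. 0 \<le> ?c t" using P(3) B by (simp add: add_nonneg_nonneg less_imp_le)
  have gap: "B * (1 - ?q) \<le> ?c t - hab \<epsilon> \<eta> \<tau> c0 ?c t" if t: "0 \<le> t" for t
    using hab_add_const_le[OF eps eta tau D(2,3) P(1) _ less_imp_le[OF B] t] P(2,3) t
    by (simp add: algebra_simps)
  have m: "0 < B * (1 - ?q)" using B q by simp
  have "?c \<in> admissible A \<delta> \<epsilon> \<eta> \<tau> k0 c0"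
    unfolding admissible_def
  proof (intro CollectI conjI cn add_const_set_integrable[OF P(1)] cap AE_I2 impI)
    fix t :: real assume t: "0 \<le> t"
    show "hab \<epsilon> \<eta> \<tau> c0 ?c t \<le> ?c t" using gap[OF t] m by linarith
    show "0 \<le> hab \<epsilon> \<eta> \<tau> c0 ?c t" by (rule hab_nonneg[OF D(3) cn t]) (use eps in simp)
  qed
  then show ?thesis using m gap by blast
qed

text \<open>A habit gap bounded below by \<open>m > 0\<close> makes the (nonpositive) objective finite,
  since then \<open>-u(c - h) \<le> m^(1-\<gamma>)/(\<gamma>-1)\<close>.\<close>

lemma objective_finite_gt1:
  fixes \<gamma> \<rho> m :: real
  assumes g: "1 < \<gamma>" and rho: "0 < \<rho>" and m: "0 < m"
    and gap: "\<forall>t\<ge>0. m \<le> c t - hab \<epsilon> \<eta> \<tau> c0 c t"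
  shows "- \<infinity> < objective \<gamma> \<rho> \<epsilon> \<eta> \<tau> c0 c"
proof -
  let ?x = "\<lambda>t. c t - hab \<epsilon> \<eta> \<tau> c0 c t"
  define D where "D = m powr (1 - \<gamma>) / (\<gamma> - 1)"
  have D: "0 \<le> D" using g by (simp add: D_def)
  have "(\<integral>\<^sup>+ t. (if 0 < ?x t then ennreal (- util \<gamma> (?x t) * exp (- \<rho> * t)) else \<infinity>) * indicator {0..} t \<partial>lborel)
     \<le> (\<integral>\<^sup>+ t. ennreal (D * exp (- \<rho> * t)) * indicator {0..} t \<partial>lborel)"
  proof (intro nn_integral_mono)
    fix t
    show "(if 0 < ?x t then ennreal (- util \<gamma> (?x t) * exp (- \<rho> * t)) else \<infinity>) * indicator {0..} t
        \<le> ennreal (D * exp (- \<rho> * t)) * indicator {0..} t"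
    proof (cases "0 \<le> t")
      case True
      then have x: "m \<le> ?x t" using gap by simp
      have "?x t powr (1 - \<gamma>) \<le> m powr (1 - \<gamma>)"
        using x m g by (intro powr_mono2') auto
      then have "- util \<gamma> (?x t) \<le> D"
        unfolding D_def util_def using g by (simp add: minus_divide_right divide_right_mono)
      then have "- util \<gamma> (?x t) * exp (- \<rho> * t) \<le> D * exp (- \<rho> * t)"
        by (intro mult_right_mono) auto
      then show ?thesis using x m True by (simp add: ennreal_leI)
    qed simp
  qed
  also have "\<dots> = ennreal (D / \<rho>)" by (rule nn_integral_exp_tail[OF rho D])
  finally show ?thesis
    unfolding objective_def using g by (simp add: ereal_uminus_less_reorder top.not_eq_extremum le_less_trans)
qed

lemma value_bounds_gt1:
  assumes "0 < \<epsilon>" "0 < \<eta>" "0 < \<tau>" and g: "1 < \<gamma>" and rho: "0 < \<rho>"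
    and a: "0 < A - \<delta>" and q: "\<epsilon> / \<eta> * (1 - exp (- \<eta> * \<tau>)) < 1"
    and d: "data_ok A \<delta> \<epsilon> \<eta> \<tau> k0 c0"
  shows "- \<infinity> < value_fun A \<delta> \<rho> \<gamma> \<epsilon> \<eta> \<tau> k0 c0"
    and "value_fun A \<delta> \<rho> \<gamma> \<epsilon> \<eta> \<tau> k0 c0 \<le> 0"
proof -
  obtain c m where c: "c \<in> admissible A \<delta> \<epsilon> \<eta> \<tau> k0 c0" and m: "0 < m"
    and gap: "\<forall>t\<ge>0. m \<le> c t - hab \<epsilon> \<eta> \<tau> c0 c t"
    using control_with_habit_margin[OF assms(1-3) d a q] by blast
  have "- \<infinity> < objective \<gamma> \<rho> \<epsilon> \<eta> \<tau> c0 c" by (rule objective_finite_gt1[OF g rho m gap])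
  also have "\<dots> \<le> value_fun A \<delta> \<rho> \<gamma> \<epsilon> \<eta> \<tau> k0 c0" unfolding value_fun_def using c by (intro SUP_upper)
  finally show "- \<infinity> < value_fun A \<delta> \<rho> \<gamma> \<epsilon> \<eta> \<tau> k0 c0" .
  show "value_fun A \<delta> \<rho> \<gamma> \<epsilon> \<eta> \<tau> k0 c0 \<le> 0"
    unfolding value_fun_def using g by (intro SUP_least) (simp add: objective_def)
qed

theorem mainTheorem4:
  fixes A \<delta> \<rho> \<gamma> \<epsilon> \<eta> \<tau> :: real
  assumes "A > 0" "\<delta> > 0" "\<rho> > 0" "\<gamma> > 0" "\<gamma> \<noteq> 1" "\<epsilon> > 0" "\<eta> > 0" "\<tau> > 0"
    and "lambda0 \<epsilon> \<eta> \<tau> < A - \<delta>"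
    and "\<rho> > (A - \<delta>) * (1 - \<gamma>)"
    and "\<gamma> > 1 \<Longrightarrow> \<epsilon> / \<eta> * (1 - exp (- \<eta> * \<tau>)) < 1 \<and> A - \<delta> > 0"
  shows "(\<forall>k0 c0. data_ok A \<delta> \<epsilon> \<eta> \<tau> k0 c0 \<longrightarrow>
            admissible A \<delta> \<epsilon> \<eta> \<tau> k0 c0 \<noteq> {} \<and>
            \<bar>value_fun A \<delta> \<rho> \<gamma> \<epsilon> \<eta> \<tau> k0 c0\<bar> \<noteq> \<infinity>)
       \<and> (\<gamma> < 1 \<longrightarrow> (\<exists>M>0. \<forall>k0 c0. data_ok A \<delta> \<epsilon> \<eta> \<tau> k0 c0 \<longrightarrow>
            0 \<le> value_fun A \<delta> \<rho> \<gamma> \<epsilon> \<eta> \<tau> k0 c0 \<and>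
            value_fun A \<delta> \<rho> \<gamma> \<epsilon> \<eta> \<tau> k0 c0 \<le> ereal (M * k0 powr (1 - \<gamma>))))
       \<and> (\<gamma> > 1 \<longrightarrow> (\<forall>k0 c0. data_ok A \<delta> \<epsilon> \<eta> \<tau> k0 c0 \<longrightarrow>
            - \<infinity> < value_fun A \<delta> \<rho> \<gamma> \<epsilon> \<eta> \<tau> k0 c0 \<and>
            value_fun A \<delta> \<rho> \<gamma> \<epsilon> \<eta> \<tau> k0 c0 \<le> 0))"
proof -
  note lt1 = value_bounds_lt1[OF assms(6,7,4) _ assms(10)]
  note gt1 = value_bounds_gt1[OF assms(6-8) _ assms(3)]
  have bounded: "\<bar>v\<bar> \<noteq> \<infinity>" if "- \<infinity> < v" "v < \<infinity>" for v :: ereal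
    using that by (cases v) auto
  have finite: "\<bar>value_fun A \<delta> \<rho> \<gamma> \<epsilon> \<eta> \<tau> k0 c0\<bar> \<noteq> \<infinity>" if d: "data_ok A \<delta> \<epsilon> \<eta> \<tau> k0 c0" for k0 c0
  proof (cases "\<gamma> < 1")
    case True
    from lt1[OF True d] show ?thesis by (intro bounded) auto
  next
    case False
    then have g: "1 < \<gamma>" using assms(5) by simp
    then have "\<epsilon> / \<eta> * (1 - exp (- \<eta> * \<tau>)) < 1" "0 < A - \<delta>" using assms(11) by auto
    from gt1[OF g this(2,1) d] show ?thesis by (intro bounded) auto
  qed
  show ?thesis
  proof (intro conjI impI)
    show "\<forall>k0 c0. data_ok A \<delta> \<epsilon> \<eta> \<tau> k0 c0 \<longrightarrow> admissible A \<delta> \<epsilon> \<eta> \<tau> k0 c0 \<noteq> {} \<and>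
        \<bar>value_fun A \<delta> \<rho> \<gamma> \<epsilon> \<eta> \<tau> k0 c0\<bar> \<noteq> \<infinity>"
    proof (intro allI impI conjI)
      fix k0 c0 assume d: "data_ok A \<delta> \<epsilon> \<eta> \<tau> k0 c0"
      show "admissible A \<delta> \<epsilon> \<eta> \<tau> k0 c0 \<noteq> {}" using cm_admissible[OF assms(6,7) d] by blast
      show "\<bar>value_fun A \<delta> \<rho> \<gamma> \<epsilon> \<eta> \<tau> k0 c0\<bar> \<noteq> \<infinity>" by (rule finite[OF d])
    qed
  next
    assume "\<gamma> < 1"
    then show "\<exists>M>0. \<forall>k0 c0. data_ok A \<delta> \<epsilon> \<eta> \<tau> k0 c0 \<longrightarrow> 0 \<le> value_fun A \<delta> \<rho> \<gamma> \<epsilon> \<eta> \<tau> k0 c0 \<and>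
        value_fun A \<delta> \<rho> \<gamma> \<epsilon> \<eta> \<tau> k0 c0 \<le> ereal (M * k0 powr (1 - \<gamma>))"
      using lt1 young_const_pos[OF assms(4) _ assms(10)] by (intro exI[of _ "young_const \<rho> (A - \<delta>) \<gamma>"]) simp
  next
    assume "1 < \<gamma>"
    then show "\<forall>k0 c0. data_ok A \<delta> \<epsilon> \<eta> \<tau> k0 c0 \<longrightarrow> - \<infinity> < value_fun A \<delta> \<rho> \<gamma> \<epsilon> \<eta> \<tau> k0 c0 \<and>
        value_fun A \<delta> \<rho> \<gamma> \<epsilon> \<eta> \<tau> k0 c0 \<le> 0"
      using gt1 assms(11) by simp
  qed
qed

end
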